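(* Let $\alpha_1,\ldots,\alpha_n\in\mathbb{R}^n$ be linearly independent unit vectors, let $Q=\{y\in\mathbb{R}^n:(y,\alpha_i)\geqslant0 \text{ for all } i\}$ with walls $B_i=\{y\in Q:(y,\alpha_i)=0\}$, and let $d>0$ and the unit vector $\mathbf{e}\in\mathbb{R}^n$ be determined by $(\mathbf{e},\alpha_i)=d$ for all $i=1,\ldots,n$ (equivalently, $d$ is the distance from the origin to the affine hyperplane through the points $\alpha_1,\ldots,\alpha_n$ and $\mathbf{e}$ its unit normal pointing away from the origin). Consider a billiard trajectory in $Q$ with unit speed that has undergone $N$ reflections at the walls, and let $\mathbf{v}_0,\mathbf{v}_1,\ldots,\mathbf{v}_N$ (points on the unit sphere) be its successive velocities. Then the length $L$ of the polygonal line through $\mathbf{v}_0,\ldots,\mathbf{v}_N$ satisfies $$L=\sum_{k=0}^{N-1}\|\mathbf{v}_{k+1}-\mathbf{v}_k\|\leqslant\frac{2}{d}.$$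
   Context: A billiard trajectory in $Q$: a point particle moves with uniform motion in the interior of $Q$ and undergoes specular reflections at the walls $B_i$, i.e. upon hitting $B_i$ its velocity $v$ is replaced by $v-2(v,\alpha_i)\alpha_i$; motion is not defined after reaching a corner $B_i\cap B_j$, $i\ne j$. *)

theory Defs
  imports "HOL-Analysis.Analysis"
begin

definition cone_Q :: "('n \<Rightarrow> real^'n) \<Rightarrow> (real^'n) set" where
  "cone_Q \<alpha> = {y. \<forall>i. y \<bullet> \<alpha> i \<ge> 0}"

definition wall :: "('n \<Rightarrow> real^'n) \<Rightarrow> 'n \<Rightarrow> (real^'n) set" where
  "wall \<alpha> i = {y \<in> cone_Q \<alpha>. y \<bullet> \<alpha> i = 0}"

text \<open>A unit-speed billiard trajectory in Q with N reflections: x 0 is the starting point,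
  x (k+1) is the point of the (k+1)-th reflection, which happens at wall w k and is not a
  corner; between consecutive points the particle moves uniformly with velocity v k through
  the interior of Q; at each reflection the velocity is reflected specularly.\<close>
definition billiard_traj ::
  "('n \<Rightarrow> real^'n) \<Rightarrow> nat \<Rightarrow> (nat \<Rightarrow> real^'n) \<Rightarrow> (nat \<Rightarrow> real^'n) \<Rightarrow> (nat \<Rightarrow> 'n) \<Rightarrow> bool" where
  "billiard_traj \<alpha> N x v w \<longleftrightarrow>
     norm (v 0) = 1 \<and> x 0 \<in> cone_Q \<alpha> \<and>
     (\<forall>k<N. \<exists>s>0. x (Suc k) = x k + s *\<^sub>R v k \<and>
              (\<forall>t. 0 < t \<and> t < s \<longrightarrow> (\<forall>j. (x k + t *\<^sub>R v k) \<bullet> \<alpha> j > 0))) \<and>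
     (\<forall>k<N. x (Suc k) \<in> wall \<alpha> (w k) \<and>
            (\<forall>j. j \<noteq> w k \<longrightarrow> x (Suc k) \<notin> wall \<alpha> j) \<and>
            v (Suc k) = v k - (2 * (v k \<bullet> \<alpha> (w k))) *\<^sub>R \<alpha> (w k))"

end

theory Submission
  imports Defs
begin

text \<open>At a reflection on the wall with unit normal \<open>a\<close> the particle is arriving, so \<open>v \<bullet> a \<le> 0\<close>, and
  the velocity jumps by \<open>-2 (v \<bullet> a) a\<close>: a vector of length \<open>-2 (v \<bullet> a)\<close> pointing along \<open>a\<close>.
  Since \<open>e \<bullet> a = d\<close> for every wall, each jump increases \<open>e \<bullet> v\<close> by exactly \<open>d\<close> times its length.
  Summing, \<open>d L = e \<bullet> v\<^sub>N - e \<bullet> v\<^sub>0 \<le> 2\<close>. Injectivity and independence of the \<open>\<alpha> i\<close> only serve to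
  guarantee that \<open>e\<close> and \<open>d\<close> exist.\<close>

definition reflect :: "'a::real_inner \<Rightarrow> 'a \<Rightarrow> 'a" where
  "reflect a u = u - (2 * (u \<bullet> a)) *\<^sub>R a"

lemma norm_reflect:
  assumes "norm a = 1"
  shows "norm (reflect a u) = norm u"
proof -
  have "a \<bullet> a = 1"
    using assms by (simp add: norm_eq_1)
  then have "reflect a u \<bullet> reflect a u = u \<bullet> u"
    by (simp add: reflect_def inner_diff_left inner_diff_right inner_commute algebra_simps)
  then show ?thesis
    by (simp add: norm_eq_sqrt_inner)
qed

lemma inner_reflect_diff_eq_norm:
  assumes "norm a = 1" and "u \<bullet> a \<le> 0" and "e \<bullet> a = d"
  shows "e \<bullet> (reflect a u - u) = d * norm (reflect a u - u)"
proof -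
  have jump: "reflect a u - u = (- 2 * (u \<bullet> a)) *\<^sub>R a"
    by (simp add: reflect_def)
  have "norm (reflect a u - u) = - 2 * (u \<bullet> a)"
    unfolding jump using assms(1,2) by simp
  then show ?thesis
    unfolding jump using assms(3) by simp
qed

lemma sum_norm_diff_le_if_inner_diff_eq:
  fixes u :: "nat \<Rightarrow> 'a::real_inner"
  assumes "d > 0" and "norm e = 1" and "norm (u 0) \<le> 1" and "norm (u N) \<le> 1"
    and "\<And>k. k < N \<Longrightarrow> e \<bullet> (u (Suc k) - u k) = d * norm (u (Suc k) - u k)"
  shows "(\<Sum>k<N. norm (u (Suc k) - u k)) \<le> 2 / d"
proof -
  have "d * (\<Sum>k<N. norm (u (Suc k) - u k)) = (\<Sum>k<N. e \<bullet> u (Suc k) - e \<bullet> u k)"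
    using assms(5) by (simp add: sum_distrib_left inner_diff_right)
  also have "\<dots> = e \<bullet> u N - e \<bullet> u 0"
    by (rule sum_lessThan_telescope)
  also have "\<dots> \<le> 2"
  proof -
    have "\<bar>e \<bullet> u N\<bar> \<le> 1" and "\<bar>e \<bullet> u 0\<bar> \<le> 1"
      using Cauchy_Schwarz_ineq2[of e] assms(2-4) by (auto intro: order_trans)
    then show ?thesis
      by linarith
  qed
  finally show ?thesis
    using assms(1) by (simp add: field_simps)
qed

lemma billiard_traj_velocity_Suc:
  assumes "billiard_traj \<alpha> N x v w" and "k < N"
  shows "v (Suc k) = reflect (\<alpha> (w k)) (v k)"
  using assms by (simp add: billiard_traj_def reflect_def)

lemma billiard_traj_norm_velocity:
  assumes "billiard_traj \<alpha> N x v w" and "\<forall>i. norm (\<alpha> i) = 1" and "k \<le> N"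
  shows "norm (v k) = 1"
  using assms(3)
proof (induction k)
  case 0
  then show ?case
    using assms(1) by (simp add: billiard_traj_def)
next
  case (Suc k)
  then have "v (Suc k) = reflect (\<alpha> (w k)) (v k)"
    using billiard_traj_velocity_Suc[OF assms(1)] by simp
  then show ?case
    using Suc norm_reflect[of "\<alpha> (w k)" "v k"] assms(2) by simp
qed

text \<open>Just before the hit the particle is strictly inside \<open>Q\<close>, and on the wall just after, so it
  must be moving towards the wall.\<close>

lemma billiard_traj_inner_wall_nonpos:
  assumes "billiard_traj \<alpha> N x v w" and "k < N"
  shows "v k \<bullet> \<alpha> (w k) \<le> 0"
proof -
  let ?a = "\<alpha> (w k)"
  obtain s where "s > 0" and hit: "x (Suc k) = x k + s *\<^sub>R v k"
    and inside: "\<And>t. 0 < t \<Longrightarrow> t < s \<Longrightarrow> (x k + t *\<^sub>R v k) \<bullet> ?a > 0"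
    using assms unfolding billiard_traj_def by blast
  have "x (Suc k) \<bullet> ?a = 0"
    using assms by (simp add: billiard_traj_def wall_def)
  then have "x k \<bullet> ?a + s * (v k \<bullet> ?a) = 0"
    by (simp add: hit inner_add_left)
  moreover have "x k \<bullet> ?a + (s / 2) * (v k \<bullet> ?a) > 0"
    using inside[of "s / 2"] \<open>s > 0\<close> by (simp add: inner_add_left)
  ultimately have "(s / 2) * (v k \<bullet> ?a) < 0"
    by linarith
  then show ?thesis
    using \<open>s > 0\<close> by (simp add: mult_less_0_iff)
qed

theorem lemma1:
  fixes \<alpha> :: "'n::finite \<Rightarrow> real^'n" and e :: "real^'n" and d :: real
    and N :: nat and x v :: "nat \<Rightarrow> real^'n" and w :: "nat \<Rightarrow> 'n"
  assumes "inj \<alpha>" and "independent (range \<alpha>)"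
    and "\<forall>i. norm (\<alpha> i) = 1"
    and "d > 0" and "norm e = 1" and "\<forall>i. e \<bullet> \<alpha> i = d"
    and "billiard_traj \<alpha> N x v w"
  shows "(\<Sum>k<N. norm (v (Suc k) - v k)) \<le> 2 / d"
proof (rule sum_norm_diff_le_if_inner_diff_eq)
  show "norm (v 0) \<le> 1" and "norm (v N) \<le> 1"
    using billiard_traj_norm_velocity[OF assms(7,3)] by simp_all
  show "e \<bullet> (v (Suc k) - v k) = d * norm (v (Suc k) - v k)" if "k < N" for k
    unfolding billiard_traj_velocity_Suc[OF assms(7) that]
    using inner_reflect_diff_eq_norm assms(3,6) billiard_traj_inner_wall_nonpos[OF assms(7) that]
    by blast
qed (use assms(4,5) in auto)

end
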